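(* Let $n\ge2$, $0\le\delta<\frac1n$, let $P^0=[d_1\ \cdots\ d_{n+1}]$ be the canonical uniform simplex, and let $P^\delta=[d_1^\delta\ \cdots\ d^\delta_{n+1}]$ with $d_1^\delta=d_1$ and $d_i^\delta=\alpha(d_i+\delta e_1)$ for $2\le i\le n+1$, where $\alpha=\frac{n}{\sqrt{n^2\delta^2-2n\delta+n^2}}$ and $\beta=\alpha^2\frac{n\delta^2-2\delta-1}{n}$. Let $B$ be the matrix with columns $d_2^\delta,\dots,d_{n+1}^\delta$ (in this order), and for $i\in\{2,\dots,n+1\}$ let $T$ be the matrix whose columns are the vectors $d_1^\delta,\dots,d_{n+1}^\delta$ with $d_i^\delta$ removed, in increasing index order. For a matrix $S$ write $\mathcal G(S)=S^\top S$. Then: (i) for any choice of $i\in\{2,\dots,n+1\}$, $\mathcal G(T)$ is the $n\times n$ matrix with all diagonal entries $1$, all other entries in the first row and first column equal to $\lambda=\alpha\left(-\frac1n+\delta\right)$, and all remaining off-diagonal entries equal to $\beta$; (ii) $\mathcal G(B)^{-1}=\frac{1}{1-\beta}I-\frac{\beta}{(1-\beta)^2\left(1+\frac{\beta n}{1-\beta}\right)}e^{n\times n}$; (iii) $\mathcal G(T)^{-1}=M^{-1}\mathcal G(B)^{-1}M^{-\top}$, where $$M^{-1}=\begin{bmatrix}-\alpha(1-\delta n) & \mathbf 0^{1\times(n-1)}\\ -e^{(n-1)\times1} & I^{(n-1)\times(n-1)}\end{bmatrix}.$$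
   Context: The canonical uniform simplex is the $n\times(n+1)$ matrix $P^0$ defined as follows, with $a_i=\sqrt{\frac{(n-i+1)(n+1)}{n(n-i+2)}}$ for $i=1,\dots,n$: for $1\le j\le n$, column $j$ has entry $-\frac{a_i}{n-i+1}$ in row $i<j$, entry $a_j$ in row $j$, and $0$ in rows $i>j$; column $n+1$ has entry $-\frac{a_i}{n-i+1}$ in every row $i$. $e_1$ is the first standard basis vector; $e^{m\times k}$ is the $m\times k$ all-ones matrix; $M^{-\top}=(M^{-1})^\top$. *)

theory Defs
  imports "Jordan_Normal_Form.Matrix" "Jordan_Normal_Form.Gauss_Jordan_Elimination"
begin

(* Indices i, j in the paper are 1-based; JNF matrices are 0-based: entry (r,c) <-> (r+1,c+1). *)

definition simplex_a :: "nat \<Rightarrow> nat \<Rightarrow> real" where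
  "simplex_a n i = sqrt ((real (n - i + 1) * real (n + 1)) / (real n * real (n - i + 2)))"

definition canonical_simplex :: "nat \<Rightarrow> real mat" where
  "canonical_simplex n = mat n (n + 1) (\<lambda>(r, c).
     let i = r + 1; j = c + 1 in
     if j \<le> n then
       (if i < j then - simplex_a n i / real (n - i + 1)
        else if i = j then simplex_a n j else 0)
     else - simplex_a n i / real (n - i + 1))"

definition simplex_d :: "nat \<Rightarrow> nat \<Rightarrow> real vec" where
  "simplex_d n j = col (canonical_simplex n) (j - 1)"

definition simplex_alpha :: "nat \<Rightarrow> real \<Rightarrow> real" where
  "simplex_alpha n \<delta> = real n / sqrt (real n ^ 2 * \<delta> ^ 2 - 2 * real n * \<delta> + real n ^ 2)"

definition simplex_beta :: "nat \<Rightarrow> real \<Rightarrow> real" where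
  "simplex_beta n \<delta> = (simplex_alpha n \<delta>) ^ 2 * ((real n * \<delta> ^ 2 - 2 * \<delta> - 1) / real n)"

definition simplex_lambda :: "nat \<Rightarrow> real \<Rightarrow> real" where
  "simplex_lambda n \<delta> = simplex_alpha n \<delta> * (- 1 / real n + \<delta>)"

definition simplex_d_delta :: "nat \<Rightarrow> real \<Rightarrow> nat \<Rightarrow> real vec" where
  "simplex_d_delta n \<delta> j = (if j = 1 then simplex_d n 1
     else simplex_alpha n \<delta> \<cdot>\<^sub>v (simplex_d n j + \<delta> \<cdot>\<^sub>v unit_vec n 0))"

definition simplex_B :: "nat \<Rightarrow> real \<Rightarrow> real mat" where
  "simplex_B n \<delta> = mat_of_cols n (map (simplex_d_delta n \<delta>) [2..<n + 2])"

definition simplex_T :: "nat \<Rightarrow> real \<Rightarrow> nat \<Rightarrow> real mat" where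
  "simplex_T n \<delta> i = mat_of_cols n (map (simplex_d_delta n \<delta>) (filter (\<lambda>j. j \<noteq> i) [1..<n + 2]))"

definition gram :: "real mat \<Rightarrow> real mat" where
  "gram S = transpose_mat S * S"

definition ones_mat :: "nat \<Rightarrow> nat \<Rightarrow> real mat" where
  "ones_mat m k = mat m k (\<lambda>_. 1)"

definition simplex_Minv :: "nat \<Rightarrow> real \<Rightarrow> real mat" where
  "simplex_Minv n \<delta> = mat n n (\<lambda>(r, c).
     if r = 0 then (if c = 0 then - simplex_alpha n \<delta> * (1 - \<delta> * real n) else 0)
     else if c = 0 then -1
     else if r = c then 1 else 0)"

end

(* The columns d_j of P^0 are unit vectors with pairwise inner products -1/n, and d_1 = e_1.
   Shifting by delta e_1 and rescaling by alpha keeps the columns d_j^delta (j >= 2) of unit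
   length, gives inner product lambda with d_1 and inner product beta between any two of them.
   So G(T) and G(B) are bordered matrices: one value on the diagonal, one off the diagonal,
   except for the first row and column. Bordered matrices of a fixed size are closed under
   products with an explicit formula for the five parameters, so (ii) and (iii) come down to
   multiplying a bordered matrix by the claimed inverse. Part (iii) holds because
   M^-T G(T) M^-1 = G(B); on the level of scalars this congruence is the identity
   n lambda^2 = 1 + (n - 1) beta. *)

theory Submission
  imports Defs "Jordan_Normal_Form.Determinant"
begin

section \<open>Bordered matrices\<close>

definition bordered_mat :: "nat \<Rightarrow> 'a \<Rightarrow> 'a \<Rightarrow> 'a \<Rightarrow> 'a \<Rightarrow> 'a \<Rightarrow> 'a mat" where
  "bordered_mat n a b c d e = mat n n (\<lambda>(r, s).
     if r = 0 then (if s = 0 then a else b)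
     else if s = 0 then c else if r = s then d else e)"

lemma bordered_mat_carrier [simp]:
  "bordered_mat n a b c d e \<in> carrier_mat n n"
  "dim_row (bordered_mat n a b c d e) = n" "dim_col (bordered_mat n a b c d e) = n"
  by (simp_all add: bordered_mat_def)

lemma bordered_mat_index [simp]:
  "r < n \<Longrightarrow> s < n \<Longrightarrow> bordered_mat n a b c d e $$ (r, s) =
    (if r = 0 then (if s = 0 then a else b) else if s = 0 then c else if r = s then d else e)"
  by (simp add: bordered_mat_def)

lemma bordered_mat_cong:
  "a = a' \<Longrightarrow> b = b' \<Longrightarrow> c = c' \<Longrightarrow> d = d' \<Longrightarrow> e = e' \<Longrightarrow>
    bordered_mat n a b c d e = bordered_mat n a' b' c' d' e'"
  by simp

lemma transpose_bordered_mat: "transpose_mat (bordered_mat n a b c d e) = bordered_mat n a c b d e"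
  by (rule eq_matI) auto

lemma one_mat_eq_bordered_mat: "1\<^sub>m n = bordered_mat n 1 0 0 1 0"
  by (rule eq_matI) auto

lemma sum_perturbed_product:
  fixes u v u' v' :: "'a :: comm_ring_1"
  assumes "finite S"
  shows "(\<Sum>k\<in>S. (u + (if k = r then v else 0)) * (u' + (if k = s then v' else 0)))
    = of_nat (card S) * u * u' + (if s \<in> S then u * v' else 0) + (if r \<in> S then v * u' else 0)
      + (if r = s \<and> r \<in> S then v * v' else 0)"
proof -
  have "(u + (if k = r then v else 0)) * (u' + (if k = s then v' else 0))
      = u * u' + (if k = s then u * v' else 0) + (if k = r then v * u' else 0)
        + (if k = r then (if k = s then v * v' else 0) else 0)" for k
    by (simp add: algebra_simps)
  then show ?thesis using assms by (simp add: sum.distrib)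
qed

lemma bordered_mat_mult:
  fixes a b c d e a' b' c' d' e' :: "'a :: comm_ring_1"
  shows "bordered_mat n a b c d e * bordered_mat n a' b' c' d' e' =
    bordered_mat n
      (a * a' + (of_nat n - 1) * b * c')
      (a * b' + b * d' + (of_nat n - 2) * b * e')
      (c * a' + d * c' + (of_nat n - 2) * e * c')
      (c * b' + d * d' + (of_nat n - 2) * e * e')
      (c * b' + d * e' + e * d' + (of_nat n - 3) * e * e')"
    (is "?A * ?A' = ?C")
proof (rule eq_matI)
  fix r s assume "r < dim_row ?C" "s < dim_col ?C"
  then have r: "r < n" and s: "s < n" by simp_all
  let ?S = "{1..<n}"
  have split: "{0..<n} = insert 0 ?S" using r by auto
  have row: "?A $$ (r, k) = (if r = 0 then b else e) + (if k = r then d - e else 0)"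
    and col: "?A' $$ (k, s) = (if s = 0 then c' else e') + (if k = s then d' - e' else 0)"
    if "k \<in> ?S" for k
    using that r s by auto
  have "(?A * ?A') $$ (r, s) = ?A $$ (r, 0) * ?A' $$ (0, s) + (\<Sum>k\<in>?S. ?A $$ (r, k) * ?A' $$ (k, s))"
    using r s by (simp add: scalar_prod_def split)
  also have "(\<Sum>k\<in>?S. ?A $$ (r, k) * ?A' $$ (k, s))
      = (\<Sum>k\<in>?S. ((if r = 0 then b else e) + (if k = r then d - e else 0))
                   * ((if s = 0 then c' else e') + (if k = s then d' - e' else 0)))"
    by (intro sum.cong) (simp_all only: row col)
  also have "\<dots> = of_nat (n - 1) * (if r = 0 then b else e) * (if s = 0 then c' else e')
      + (if s \<in> ?S then (if r = 0 then b else e) * (d' - e') else 0)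
      + (if r \<in> ?S then (d - e) * (if s = 0 then c' else e') else 0)
      + (if r = s \<and> r \<in> ?S then (d - e) * (d' - e') else 0)"
    by (simp add: sum_perturbed_product)
  finally show "(?A * ?A') $$ (r, s) = ?C $$ (r, s)"
    using r s by (auto simp: of_nat_diff algebra_simps)
qed simp_all

lemma mat_inverse_eqI:
  fixes A X :: "'a :: field mat"
  assumes A: "A \<in> carrier_mat n n" and X: "X \<in> carrier_mat n n" and AX: "A * X = 1\<^sub>m n"
  shows "mat_inverse A = Some X"
proof -
  have "det A \<noteq> 0" using det_mult[OF A X] AX by auto
  then have "A \<in> Units (ring_mat TYPE('a) n undefined)" by (rule det_non_zero_imp_unit[OF A])
  then obtain B where B: "mat_inverse A = Some B" using mat_inverse(1)[OF A] by fastforce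
  then have BA: "B * A = 1\<^sub>m n" and "B \<in> carrier_mat n n" using mat_inverse(2)[OF A] by auto
  then have "B = B * (A * X)" using AX by simp
  also have "\<dots> = X" using BA A X \<open>B \<in> carrier_mat n n\<close> by (simp add: assoc_mult_mat[symmetric])
  finally show ?thesis using B by simp
qed

lemma mat_inverse_bordered_mat_uniform:
  fixes b :: "'a :: field"
  assumes "b \<noteq> 1" "1 + (of_nat n - 1) * b \<noteq> 0"
  defines "p \<equiv> 1 / (1 - b)" and "q \<equiv> b / ((1 - b) * (1 + (of_nat n - 1) * b))"
  shows "mat_inverse (bordered_mat n 1 b b 1 b) = Some (bordered_mat n (p - q) (- q) (- q) (p - q) (- q))"
proof (rule mat_inverse_eqI)
  define G where "G = 1 + (of_nat n - 1) * b"
  have "1 - b \<noteq> 0" "G \<noteq> 0" using assms by (simp_all add: G_def)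
  then have "q * G = b * p" "p * (1 - b) = 1" unfolding q_def p_def G_def[symmetric] by simp_all
  then have "p - q * (1 + (of_nat n - 1) * b) = 1" "b * p - q * (1 + (of_nat n - 1) * b) = 0"
    unfolding G_def by (simp_all add: algebra_simps)
  then show "bordered_mat n 1 b b 1 b * bordered_mat n (p - q) (- q) (- q) (p - q) (- q) = 1\<^sub>m n"
    unfolding bordered_mat_mult one_mat_eq_bordered_mat
    by (intro bordered_mat_cong) (simp_all add: algebra_simps)
qed simp_all

lemma bordered_mat_congruence_uniform:
  fixes t p q :: "'a :: comm_ring_1"
  shows "bordered_mat n t 0 (- 1) 1 0 * bordered_mat n (p - q) (- q) (- q) (p - q) (- q)
      * transpose_mat (bordered_mat n t 0 (- 1) 1 0)
    = bordered_mat n (t * t * (p - q)) (- t * p) (- t * p) (2 * p) p"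
  unfolding transpose_bordered_mat bordered_mat_mult
  by (rule bordered_mat_cong) (simp_all add: algebra_simps)

lemma mat_inverse_bordered_mat_congruence:
  fixes l b :: "'a :: field"
  assumes "b \<noteq> 1" "1 + (of_nat n - 1) * b \<noteq> 0" "of_nat n * l\<^sup>2 = 1 + (of_nat n - 1) * b"
  defines "N \<equiv> bordered_mat n (of_nat n * l) 0 (- 1) 1 0"
  shows "mat_inverse (bordered_mat n 1 l l 1 b) =
    Some (N * the (mat_inverse (bordered_mat n 1 b b 1 b)) * transpose_mat N)"
proof -
  define m where "m = (of_nat n :: 'a)"
  define G where "G = 1 + (m - 1) * b"
  define p where "p = 1 / (1 - b)"
  define q where "q = b / ((1 - b) * G)"
  define t where "t = m * l"
  have "1 - b \<noteq> 0" "G \<noteq> 0" using assms(1,2) by (simp_all add: G_def m_def)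
  then have E1: "p * (1 - b) - 1 = 0" and E2: "q * G - b * p = 0" by (simp_all add: p_def q_def)
  have E3: "m * l\<^sup>2 - G = 0" using assms(3) by (simp add: m_def G_def)
  have Y: "N * the (mat_inverse (bordered_mat n 1 b b 1 b)) * transpose_mat N
      = bordered_mat n (t * t * (p - q)) (- t * p) (- t * p) (2 * p) p"
    using mat_inverse_bordered_mat_uniform[OF assms(1,2)]
    by (simp add: N_def p_def q_def G_def m_def t_def bordered_mat_congruence_uniform)
  \<comment> \<open>each entry of the product minus the identity is a combination of E1, E2, E3\<close>
  have "1 * (t * t * (p - q)) + (m - 1) * l * (- t * p) - 1
      = (p * (1 - b) - 1) - m * (q * G - b * p) + (p - m * q) * (m * l\<^sup>2 - G)"
    and "l * (t * t * (p - q)) + 1 * (- t * p) + (m - 2) * b * (- t * p)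
      = m * l * ((p - q) * (m * l\<^sup>2 - G) - (q * G - b * p))"
    and "l * (- t * p) + 1 * (2 * p) + (m - 2) * b * p - 1 = (p * (1 - b) - 1) - p * (m * l\<^sup>2 - G)"
    and "l * (- t * p) + 1 * p + b * (2 * p) + (m - 3) * b * p = - p * (m * l\<^sup>2 - G)"
    by (simp_all add: t_def G_def algebra_simps power2_eq_square)
  then have "1 * (t * t * (p - q)) + (m - 1) * l * (- t * p) = 1"
    and "l * (t * t * (p - q)) + 1 * (- t * p) + (m - 2) * b * (- t * p) = 0"
    and "l * (- t * p) + 1 * (2 * p) + (m - 2) * b * p = 1"
    and "l * (- t * p) + 1 * p + b * (2 * p) + (m - 3) * b * p = 0"
    and "1 * (- t * p) + l * (2 * p) + (m - 2) * l * p = 0"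
    unfolding E1 E2 E3 by (simp_all add: t_def algebra_simps)
  then have "bordered_mat n 1 l l 1 b * bordered_mat n (t * t * (p - q)) (- t * p) (- t * p) (2 * p) p
      = 1\<^sub>m n"
    unfolding bordered_mat_mult one_mat_eq_bordered_mat m_def[symmetric]
    by (intro bordered_mat_cong)
  then show ?thesis unfolding Y by (intro mat_inverse_eqI) simp_all
qed

lemma gram_mat_of_cols:
  assumes "set vs \<subseteq> carrier_vec n"
  shows "gram (mat_of_cols n vs) = mat (length vs) (length vs) (\<lambda>(r, c). vs ! r \<bullet> vs ! c)"
  unfolding gram_def
  by (rule eq_matI) (use assms in \<open>auto intro!: arg_cong2[where f = scalar_prod] col_mat_of_cols\<close>)

section \<open>The canonical uniform simplex\<close>

lemma canonical_simplex_dim [simp]: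
  "dim_row (canonical_simplex n) = n" "dim_col (canonical_simplex n) = n + 1"
  by (simp_all add: canonical_simplex_def)

lemma simplex_a_Suc_sq:
  assumes "r < n"
  shows "simplex_a n (Suc r) ^ 2 = (real n - real r) * (real n + 1) / (real n * (real n - real r + 1))"
proof -
  have "n - Suc r + 1 = n - r" "n - Suc r + 2 = n - r + 1" using assms by auto
  then show ?thesis
    unfolding simplex_a_def using assms by (simp add: of_nat_diff add_ac)
qed

(* the last column, c = n, falls under the case r < c *)
lemma canonical_simplex_index:
  assumes "r < n" "c \<le> n"
  shows "canonical_simplex n $$ (r, c) =
    (if r < c then - simplex_a n (Suc r) / (real n - real r)
     else if r = c then simplex_a n (Suc r) else 0)"
proof -
  have "real (n - Suc r + 1) = real n - real r" using assms by (simp add: of_nat_diff)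
  then show ?thesis unfolding canonical_simplex_def using assms by (auto simp: Let_def)
qed

lemma sum_canonical_simplex_above_diag_sq:
  assumes "m \<le> n"
  shows "(\<Sum>r<m. (simplex_a n (Suc r) / (real n - real r))\<^sup>2) = real m / (real n * (real n - real m + 1))"
  using assms
proof (induction m)
  case (Suc m)
  then have m: "m < n" by simp
  have "(simplex_a n (Suc m) / (real n - real m))\<^sup>2
      = (real n + 1) / (real n * (real n - real m + 1) * (real n - real m))"
  proof -
    have "real n - real m \<noteq> 0" using m by simp
    then show ?thesis unfolding power_divide simplex_a_Suc_sq[OF m] by (simp add: power2_eq_square)
  qed
  then have "(\<Sum>r<Suc m. (simplex_a n (Suc r) / (real n - real r))\<^sup>2)
      = real m / (real n * (real n - real m + 1))
        + (real n + 1) / (real n * (real n - real m + 1) * (real n - real m))"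
    using Suc m by simp
  also have "\<dots> = real (Suc m) / (real n * (real n - real (Suc m) + 1))"
  proof -
    have "real n > 0" "real n - real m > 0" "real n - real m + 1 > 0" using m by auto
    then show ?thesis by (simp add: divide_simps) (simp add: algebra_simps)
  qed
  finally show ?case .
qed simp

lemma canonical_simplex_col_dot_le:
  assumes "n \<ge> 1" "c1 \<le> c2" "c2 \<le> n"
  shows "col (canonical_simplex n) c1 \<bullet> col (canonical_simplex n) c2 = (if c1 = c2 then 1 else - 1 / real n)"
proof -
  let ?P = "canonical_simplex n"
  let ?f = "\<lambda>r. ?P $$ (r, c1) * ?P $$ (r, c2)"
  have dot: "col ?P c1 \<bullet> col ?P c2 = (\<Sum>r<n. ?f r)"
    unfolding scalar_prod_def using assms by (simp add: lessThan_atLeast0)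
  have above: "(\<Sum>r<m. ?f r) = real m / (real n * (real n - real m + 1))" if "m \<le> c1" for m
  proof -
    have "(\<Sum>r<m. ?f r) = (\<Sum>r<m. (simplex_a n (Suc r) / (real n - real r))\<^sup>2)"
      using that assms by (intro sum.cong) (auto simp: canonical_simplex_index power2_eq_square)
    then show ?thesis using that assms by (simp add: sum_canonical_simplex_above_diag_sq)
  qed
  show ?thesis
  proof (cases "c1 < n")
    case True
    have "(\<Sum>r<n. ?f r) = (\<Sum>r<Suc c1. ?f r)"
      using True assms by (intro sum.mono_neutral_right) (auto simp: canonical_simplex_index)
    also have "\<dots> = real c1 / (real n * (real n - real c1 + 1)) + simplex_a n (Suc c1) * ?P $$ (c1, c2)"
      unfolding sum.lessThan_Suc above[OF order.refl] using True assms by (simp add: canonical_simplex_index)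
    also have "\<dots> = (if c1 = c2 then 1 else - 1 / real n)"
    proof -
      have pos: "real n > 0" "real n - real c1 > 0" "real n - real c1 + 1 > 0" using True by auto
      have "simplex_a n (Suc c1) * ?P $$ (c1, c2) =
          (if c1 = c2 then 1 else - 1 / (real n - real c1)) * simplex_a n (Suc c1) ^ 2"
        using True assms by (simp add: canonical_simplex_index power2_eq_square)
      then show ?thesis
        unfolding simplex_a_Suc_sq[OF True] using pos
        by (simp add: divide_simps) (simp add: algebra_simps)
    qed
    finally show ?thesis unfolding dot .
  next
    case False
    then have "c1 = n" "c2 = n" using assms by auto
    with above[of n] show ?thesis unfolding dot using assms by simp
  qed
qed

lemma canonical_simplex_col_dot:
  assumes "n \<ge> 1" "c1 \<le> n" "c2 \<le> n"
  shows "col (canonical_simplex n) c1 \<bullet> col (canonical_simplex n) c2 = (if c1 = c2 then 1 else - 1 / real n)"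
proof (cases "c1 \<le> c2")
  case False
  have "col (canonical_simplex n) c1 \<bullet> col (canonical_simplex n) c2
      = col (canonical_simplex n) c2 \<bullet> col (canonical_simplex n) c1"
    by (rule comm_scalar_prod[of _ n]) (use col_dim[of "canonical_simplex n"] in auto)
  with False show ?thesis using canonical_simplex_col_dot_le[of n c2 c1] assms by auto
qed (use assms canonical_simplex_col_dot_le in auto)

lemma simplex_d_carrier [simp]: "simplex_d n j \<in> carrier_vec n"
  unfolding simplex_d_def using col_dim[of "canonical_simplex n"] by simp

lemma simplex_d_dot:
  assumes "n \<ge> 1" "j \<in> {1..n+1}" "k \<in> {1..n+1}"
  shows "simplex_d n j \<bullet> simplex_d n k = (if j = k then 1 else - 1 / real n)"
  using assms canonical_simplex_col_dot[of n "j - 1" "k - 1"] by (auto simp: simplex_d_def)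

lemma simplex_d_1:
  assumes "n \<ge> 1"
  shows "simplex_d n 1 = unit_vec n 0"
proof (rule eq_vecI)
  have "simplex_a n 1 = 1"
    unfolding simplex_a_def using assms by (simp add: Suc_diff_le)
  then show "simplex_d n 1 $ r = unit_vec n 0 $ r" if "r < dim_vec (unit_vec n 0)" for r
    using that by (simp add: simplex_d_def canonical_simplex_index col_def canonical_simplex_def)
qed simp

section \<open>The perturbed simplex\<close>

lemma simplex_alpha_sq:
  assumes "n \<ge> 2"
  shows "simplex_alpha n \<delta> ^ 2 * (real n * \<delta>\<^sup>2 - 2 * \<delta> + real n) = real n"
proof -
  define D where "D = real n * \<delta>\<^sup>2 - 2 * \<delta> + real n"
  have "real n * D = (real n * \<delta> - 1)\<^sup>2 + (real n ^ 2 - 1)"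
    unfolding D_def by (simp add: algebra_simps power2_eq_square)
  moreover have "real n ^ 2 > 1" using assms by (simp add: one_less_power)
  ultimately have "real n * D > 0" by (smt (verit) zero_le_power2)
  moreover have "real n ^ 2 * \<delta> ^ 2 - 2 * real n * \<delta> + real n ^ 2 = real n * D"
    unfolding D_def by (simp add: algebra_simps power2_eq_square)
  ultimately show ?thesis
    unfolding simplex_alpha_def power_divide D_def[symmetric] using assms
    by (simp add: power2_eq_square zero_less_mult_iff)
qed

lemma simplex_alpha_nonzero:
  assumes "n \<ge> 2"
  shows "simplex_alpha n \<delta> \<noteq> 0"
  using simplex_alpha_sq[OF assms, of \<delta>] assms by auto

lemma simplex_beta_scaled:
  assumes "n \<ge> 1"
  shows "real n * simplex_beta n \<delta> = simplex_alpha n \<delta> ^ 2 * (real n * \<delta>\<^sup>2 - 2 * \<delta> - 1)"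
  unfolding simplex_beta_def using assms by simp

lemma simplex_one_minus_beta:
  assumes "n \<ge> 2"
  shows "real n * (1 - simplex_beta n \<delta>) = simplex_alpha n \<delta> ^ 2 * (real n + 1)"
proof -
  let ?A = "simplex_alpha n \<delta> ^ 2"
  have "real n * (1 - simplex_beta n \<delta>) = real n - real n * simplex_beta n \<delta>"
    by (simp add: algebra_simps)
  also have "\<dots> = ?A * (real n * \<delta>\<^sup>2 - 2 * \<delta> + real n) - ?A * (real n * \<delta>\<^sup>2 - 2 * \<delta> - 1)"
    using assms by (simp add: simplex_alpha_sq simplex_beta_scaled)
  also have "\<dots> = ?A * (real n + 1)"
    by (simp add: algebra_simps)
  finally show ?thesis .
qed

lemma simplex_beta_less_one:
  assumes "n \<ge> 2"
  shows "simplex_beta n \<delta> < 1"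
proof -
  have "real n * (1 - simplex_beta n \<delta>) > 0"
    unfolding simplex_one_minus_beta[OF assms] using simplex_alpha_nonzero[OF assms] by simp
  then show ?thesis using assms by (simp add: zero_less_mult_iff)
qed

lemma simplex_lambda_sq:
  assumes "n \<ge> 2"
  shows "real n * simplex_lambda n \<delta> ^ 2 = 1 + (real n - 1) * simplex_beta n \<delta>"
proof -
  let ?A = "simplex_alpha n \<delta> ^ 2"
  have "real n * (real n * simplex_lambda n \<delta> ^ 2) = ?A * (real n * \<delta> - 1)\<^sup>2"
    using assms by (simp add: simplex_lambda_def power_mult_distrib field_simps power2_eq_square)
  also have "\<dots> = ?A * (real n * \<delta>\<^sup>2 - 2 * \<delta> + real n)
      + (real n - 1) * (?A * (real n * \<delta>\<^sup>2 - 2 * \<delta> - 1))"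
    by (simp add: algebra_simps power2_eq_square)
  also have "\<dots> = real n + (real n - 1) * (real n * simplex_beta n \<delta>)"
    using assms by (simp only: simplex_alpha_sq simplex_beta_scaled)
  also have "\<dots> = real n * (1 + (real n - 1) * simplex_beta n \<delta>)"
    by (simp add: algebra_simps)
  finally show ?thesis using assms by simp
qed

lemma simplex_lambda_nonzero:
  assumes "n \<ge> 2" "real n * \<delta> \<noteq> 1"
  shows "simplex_lambda n \<delta> \<noteq> 0"
  unfolding simplex_lambda_def using assms simplex_alpha_nonzero[OF assms(1)] by (auto simp: field_simps)

lemma simplex_d_delta_carrier [simp]: "simplex_d_delta n \<delta> j \<in> carrier_vec n"
  unfolding simplex_d_delta_def by simp

lemma simplex_d_delta_dot:
  assumes "n \<ge> 2" "j \<in> {1..n+1}" "k \<in> {1..n+1}"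
  shows "simplex_d_delta n \<delta> j \<bullet> simplex_d_delta n \<delta> k =
    (if j = k then 1 else if j = 1 \<or> k = 1 then simplex_lambda n \<delta> else simplex_beta n \<delta>)"
proof -
  let ?\<alpha> = "simplex_alpha n \<delta>" and ?e = "simplex_d n 1"
  have n: "n \<ge> 1" "real n > 0" using assms(1) by auto
  have e: "unit_vec n 0 = ?e" using simplex_d_1[OF n(1)] by simp
  have d: "simplex_d_delta n \<delta> i = (if i = 1 then ?e else ?\<alpha> \<cdot>\<^sub>v (simplex_d n i + \<delta> \<cdot>\<^sub>v ?e))" for i
    unfolding simplex_d_delta_def e ..
  have shifted: "(simplex_d n x + \<delta> \<cdot>\<^sub>v ?e) \<bullet> (simplex_d n y + \<delta> \<cdot>\<^sub>v ?e)
      = simplex_d n x \<bullet> simplex_d n y + \<delta> * (?e \<bullet> simplex_d n y)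
        + \<delta> * (simplex_d n x \<bullet> ?e) + \<delta>\<^sup>2 * (?e \<bullet> ?e)"
    for x y
    by (simp add: add_scalar_prod_distrib[of _ n] scalar_prod_add_distrib[of _ n]
        smult_scalar_prod_distrib[of _ n] scalar_prod_smult_distrib[of _ n] power2_eq_square algebra_simps)
  have e_dot: "?e \<bullet> simplex_d n i = (if i = 1 then 1 else - 1 / real n)"
    "simplex_d n i \<bullet> ?e = (if i = 1 then 1 else - 1 / real n)" if "i \<in> {1..n+1}" for i
    using simplex_d_dot[OF n(1) _ that, of 1] simplex_d_dot[OF n(1) that, of 1] that by auto
  have e_dot_delta: "?e \<bullet> simplex_d_delta n \<delta> i = simplex_lambda n \<delta>"
    "simplex_d_delta n \<delta> i \<bullet> ?e = simplex_lambda n \<delta>" if "i \<in> {2..n+1}" for i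
    using that e_dot[of i] e_dot[of 1] unfolding d simplex_lambda_def
    by (auto simp: scalar_prod_add_distrib[of _ n] add_scalar_prod_distrib[of _ n]
        scalar_prod_smult_distrib[of _ n] smult_scalar_prod_distrib[of _ n])
  consider "j = 1" "k = 1" | "j = 1" "k \<noteq> 1" | "j \<noteq> 1" "k = 1" | "j \<noteq> 1" "k \<noteq> 1" by blast
  then show ?thesis
  proof cases
    case 4
    have "simplex_d_delta n \<delta> j \<bullet> simplex_d_delta n \<delta> k
        = ?\<alpha>\<^sup>2 * ((simplex_d n j + \<delta> \<cdot>\<^sub>v ?e) \<bullet> (simplex_d n k + \<delta> \<cdot>\<^sub>v ?e))"
      using 4 unfolding d
      by (simp add: smult_scalar_prod_distrib[of _ n] scalar_prod_smult_distrib[of _ n] power2_eq_square)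
    also have "\<dots> = ?\<alpha>\<^sup>2 * ((if j = k then 1 else - 1 / real n) - 2 * \<delta> / real n + \<delta>\<^sup>2)"
      unfolding shifted e_dot[OF assms(2)] e_dot[OF assms(3)] simplex_d_dot[OF n(1) assms(2,3)]
      using 4 simplex_d_dot[OF n(1), of 1 1] by simp
    also have "\<dots> = (if j = k then 1 else simplex_beta n \<delta>)"
      using simplex_alpha_sq[OF assms(1), of \<delta>] n(2)
      by (auto simp: simplex_beta_def field_simps)
    finally show ?thesis using 4 by simp
  qed (use assms e_dot e_dot_delta in \<open>auto simp: d\<close>)
qed

lemma gram_simplex_columns:
  assumes "n \<ge> 2" "distinct js" "set js \<subseteq> {1..n+1}" "length js = n"
  shows "gram (mat_of_cols n (map (simplex_d_delta n \<delta>) js)) = mat n n (\<lambda>(r, c).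
    if r = c then 1 else if js ! r = 1 \<or> js ! c = 1 then simplex_lambda n \<delta> else simplex_beta n \<delta>)"
proof -
  have "set (map (simplex_d_delta n \<delta>) js) \<subseteq> carrier_vec n" by auto
  moreover have "js ! r \<in> {1..n+1}" if "r < n" for r using assms(3,4) that nth_mem by blast
  moreover have "js ! r = js ! c \<longleftrightarrow> r = c" if "r < n" "c < n" for r c
    using assms(2,4) that by (simp add: nth_eq_iff_index_eq)
  ultimately show ?thesis
    using assms(1,4) by (auto simp: gram_mat_of_cols simplex_d_delta_dot)
qed

lemma gram_simplex_T:
  assumes "n \<ge> 2" "i \<in> {2..n+1}"
  shows "gram (simplex_T n \<delta> i) =
    bordered_mat n 1 (simplex_lambda n \<delta>) (simplex_lambda n \<delta>) 1 (simplex_beta n \<delta>)"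
proof -
  define js where "js = filter (\<lambda>j. j \<noteq> i) [1..<n + 2]"
  have set_js: "set js = {1..<n+2} - {i}" and "distinct js" by (auto simp: js_def)
  then have len: "length js = n" using distinct_card[of js] assms(2) by (simp add: card_Diff_singleton)
  have "js = 1 # filter (\<lambda>j. j \<noteq> i) [2..<n + 2]"
    unfolding js_def using assms(2) by (subst upt_conv_Cons) (auto simp: numeral_2_eq_2)
  then have "js ! r = 1 \<longleftrightarrow> r = 0" if "r < n" for r
    using that len \<open>distinct js\<close> nth_eq_iff_index_eq[of js r 0] by auto
  then show ?thesis
    unfolding simplex_T_def js_def[symmetric] using assms(1) set_js len \<open>distinct js\<close>
    by (subst gram_simplex_columns) (auto intro!: eq_matI)
qed

lemma gram_simplex_B:
  assumes "n \<ge> 2"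
  shows "gram (simplex_B n \<delta>) =
    bordered_mat n 1 (simplex_beta n \<delta>) (simplex_beta n \<delta>) 1 (simplex_beta n \<delta>)"
proof -
  define js where "js = [2..<n + 2]"
  have "set js = {2..<n+2}" "distinct js" "length js = n"
    by (simp_all only: js_def set_upt distinct_upt length_upt diff_add_inverse2)
  then have "js ! r \<noteq> 1" if "r < n" for r using that nth_mem[of r js] by auto
  then show ?thesis
    unfolding simplex_B_def js_def[symmetric] using assms \<open>set js = _\<close> \<open>distinct js\<close> \<open>length js = n\<close>
    by (subst gram_simplex_columns) (auto intro!: eq_matI)
qed

lemma simplex_Minv_eq_bordered_mat:
  assumes "n \<ge> 1"
  shows "simplex_Minv n \<delta> = bordered_mat n (real n * simplex_lambda n \<delta>) 0 (- 1) 1 0"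
  unfolding simplex_Minv_def simplex_lambda_def using assms
  by (intro eq_matI) (auto simp: field_simps)

lemma smult_one_minus_smult_ones_eq_bordered_mat:
  "x \<cdot>\<^sub>m 1\<^sub>m n - y \<cdot>\<^sub>m ones_mat n n = bordered_mat n (x - y) (- y) (- y) (x - y) (- y)"
  unfolding ones_mat_def by (intro eq_matI) auto

theorem lemma10:
  fixes n :: nat and \<delta> :: real
  assumes "n \<ge> 2" and "0 \<le> \<delta>" and "\<delta> < 1 / real n"
  shows "(\<forall>i\<in>{2..n+1}. gram (simplex_T n \<delta> i) =
            mat n n (\<lambda>(r, c). if r = c then 1
                              else if r = 0 \<or> c = 0 then simplex_lambda n \<delta>
                              else simplex_beta n \<delta>))
       \<and> mat_inverse (gram (simplex_B n \<delta>)) =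
            Some ((1 / (1 - simplex_beta n \<delta>)) \<cdot>\<^sub>m 1\<^sub>m n
              - (simplex_beta n \<delta> / ((1 - simplex_beta n \<delta>) ^ 2
                   * (1 + simplex_beta n \<delta> * real n / (1 - simplex_beta n \<delta>)))) \<cdot>\<^sub>m ones_mat n n)
       \<and> (\<forall>i\<in>{2..n+1}. mat_inverse (gram (simplex_T n \<delta> i)) =
            Some (simplex_Minv n \<delta> * the (mat_inverse (gram (simplex_B n \<delta>)))
                  * transpose_mat (simplex_Minv n \<delta>)))"
proof -
  let ?l = "simplex_lambda n \<delta>" and ?b = "simplex_beta n \<delta>"
  have n: "n \<ge> 2" "n \<ge> 1" "real n > 0" using assms(1) by auto
  have b_ne: "?b \<noteq> 1" using simplex_beta_less_one[OF n(1), of \<delta>] by linarith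
  have l_sq: "real n * ?l\<^sup>2 = 1 + (real n - 1) * ?b" by (rule simplex_lambda_sq[OF n(1)])
  \<comment> \<open>of the hypotheses on \<delta> only \<delta> \<noteq> 1 / n is needed\<close>
  have "real n * \<delta> \<noteq> 1" using assms(3) n(3) by (simp add: field_simps)
  then have G: "1 + (real n - 1) * ?b \<noteq> 0"
    unfolding l_sq[symmetric] using n simplex_lambda_nonzero[OF n(1)] by simp
  have "(1 - ?b) ^ 2 * (1 + ?b * real n / (1 - ?b)) = (1 - ?b) * (1 + (real n - 1) * ?b)"
    using b_ne by (simp add: power2_eq_square field_simps)
  then have ii: "mat_inverse (gram (simplex_B n \<delta>)) =
      Some ((1 / (1 - ?b)) \<cdot>\<^sub>m 1\<^sub>m n
        - (?b / ((1 - ?b) ^ 2 * (1 + ?b * real n / (1 - ?b)))) \<cdot>\<^sub>m ones_mat n n)"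
    unfolding gram_simplex_B[OF n(1)] smult_one_minus_smult_ones_eq_bordered_mat
    using mat_inverse_bordered_mat_uniform[OF b_ne G] by simp
  have "gram (simplex_T n \<delta> i) = mat n n (\<lambda>(r, c). if r = c then 1 else if r = 0 \<or> c = 0 then ?l else ?b)"
    and "mat_inverse (gram (simplex_T n \<delta> i)) =
      Some (simplex_Minv n \<delta> * the (mat_inverse (gram (simplex_B n \<delta>))) * transpose_mat (simplex_Minv n \<delta>))"
    if "i \<in> {2..n+1}" for i
    unfolding gram_simplex_T[OF n(1) that] gram_simplex_B[OF n(1)] simplex_Minv_eq_bordered_mat[OF n(2)]
    using mat_inverse_bordered_mat_congruence[OF b_ne G l_sq] by (auto intro!: eq_matI)
  with ii show ?thesis by blast
qed

end
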